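(* Let $u\in\mathbb{F}_q$ be such that $u^2-u+1$ is a non-square in $\mathbb{F}_q$, and let $\ell_u$ be the line $Y_3-3uY_2+3u^2Y_1-u^3Y_0=0,\ Y_1-Y_2=0$ (i.e. $\ell_u=\delta_3(\mathcal{Z}((X_1-uX_0)^3))\cap\delta_3(\mathcal{Z}(X_0X_1(X_0-X_1)))$). Then if $-3$ is a square in $\mathbb{F}_q$: $OD_2(\ell_u)=[1,0,\tfrac{q-1}{6},\tfrac{q+1}{2},\tfrac{q-1}{3}]$ and $OD_0(\ell_u)=[0,1,\tfrac{q-1}{2},\tfrac{q+1}{2},0]$; if $-3$ is a non-square in $\mathbb{F}_q$: $OD_2(\ell_u)=[1,0,\tfrac{q+1}{6},\tfrac{q-1}{2},\tfrac{q+1}{3}]$ and $OD_0(\ell_u)=[0,1,\tfrac{q-1}{2},\tfrac{q+1}{2},0]$.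
   Context: Let $q$ be a power of a prime $p\neq 2,3$. In $\mathrm{PG}(3,q)$ with coordinates $(Y_0,\dots,Y_3)$, the twisted cubic is $\mathcal{C}=\{P(t)=(1,t,t^2,t^3):t\in\mathbb{F}_q\}\cup\{P(\infty)=(0,0,0,1)\}$. Osculating planes: $\Pi(t):-t^3Y_0+3t^2Y_1-3tY_2+Y_3=0$ ($t\in\mathbb{F}_q$), $\Pi(\infty):Y_0=0$. Tangent line at $P\in\mathcal{C}$: the line through $P$ meeting $\mathcal{C}$ with multiplicity two at $P$. For a binary cubic form $f=y_{30}X_0^3+y_{21}X_0^2X_1+y_{12}X_0X_1^2+y_{03}X_1^3$, $\delta_3(\mathcal{Z}(f))$ is the plane $y_{30}Y_0+y_{21}Y_1+y_{12}Y_2+y_{03}Y_3=0$. Point classes: $\mathcal{P}_1$ = points of $\mathcal{C}$; $\mathcal{P}_2$ = points not on $\mathcal{C}$ on a tangent line; $\mathcal{P}_3$ = points not on $\mathcal{C}$ on exactly three osculating planes; $\mathcal{P}_4$ = points not on $\mathcal{C}$ on exactly one osculating plane; $\mathcal{P}_5$ = points on no osculating plane. Plane classes: $\mathcal{H}_1$ = osculating planes; $\mathcal{H}_2$ = planes meeting $\mathcal{C}$ in exactly two points; $\mathcal{H}_3$ = exactly three points; $\mathcal{H}_4$ = non-osculating planes meeting $\mathcal{C}$ in exactly one point; $\mathcal{H}_5$ = planes disjoint from $\mathcal{C}$. $OD_0(\ell)$ (resp. $OD_2(\ell)$) is the list of the numbers of points of $\ell$ in $\mathcal{P}_1,\dots,\mathcal{P}_5$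 (resp. planes through $\ell$ in $\mathcal{H}_1,\dots,\mathcal{H}_5$). *)

theory Defs
  imports Main
begin

text \<open>Homogeneous coordinates (Y0,Y1,Y2,Y3) of PG(3,q) over a finite field 'a.\<close>
type_synonym 'a vec4 = "'a \<times> 'a \<times> 'a \<times> 'a"

definition scal4 :: "'a::field \<Rightarrow> 'a vec4 \<Rightarrow> 'a vec4" where
  "scal4 c v = (case v of (a,b,d,e) \<Rightarrow> (c*a, c*b, c*d, c*e))"

definition add4 :: "'a::field vec4 \<Rightarrow> 'a vec4 \<Rightarrow> 'a vec4" where
  "add4 v w = (case v of (a,b,c,d) \<Rightarrow> case w of (a',b',c',d') \<Rightarrow> (a+a', b+b', c+c', d+d'))"

definition dot4 :: "'a::field vec4 \<Rightarrow> 'a vec4 \<Rightarrow> 'a" where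
  "dot4 h v = (case h of (h0,h1,h2,h3) \<Rightarrow> case v of (y0,y1,y2,y3) \<Rightarrow>
      h0*y0 + h1*y1 + h2*y2 + h3*y3)"

text \<open>Points of PG(3,q) are classes of nonzero coordinate vectors; planes are
  classes of nonzero coefficient vectors (plane h: h0 Y0 + ... + h3 Y3 = 0).\<close>
definition proj :: "'a::field vec4 \<Rightarrow> 'a vec4 set" where
  "proj v = {scal4 c v | c. c \<noteq> 0}"

definition PG3 :: "'a::field vec4 set set" where
  "PG3 = {proj v | v. v \<noteq> (0, 0, 0, 0)}"

definition on_plane :: "'a::field vec4 set \<Rightarrow> 'a vec4 set \<Rightarrow> bool" where
  "on_plane P H \<longleftrightarrow> (\<exists>v\<in>P. \<exists>h\<in>H. dot4 h v = 0)"

definition cubic_pt :: "'a::field \<Rightarrow> 'a vec4 set" where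
  "cubic_pt t = proj (1, t, t^2, t^3)"

definition cubic_pt_inf :: "'a::field vec4 set" where
  "cubic_pt_inf = proj (0, 0, 0, 1)"

definition twisted_cubic :: "'a::field vec4 set set" where
  "twisted_cubic = range cubic_pt \<union> {cubic_pt_inf}"

definition osc_plane :: "'a::field \<Rightarrow> 'a vec4 set" where
  "osc_plane t = proj (- (t^3), 3 * t^2, - 3 * t, 1)"

definition osc_plane_inf :: "'a::field vec4 set" where
  "osc_plane_inf = proj (1, 0, 0, 0)"

definition osc_planes :: "'a::field vec4 set set" where
  "osc_planes = range osc_plane \<union> {osc_plane_inf}"

definition span_line :: "'a::field vec4 \<Rightarrow> 'a vec4 \<Rightarrow> 'a vec4 set set" where
  "span_line v w = {P \<in> PG3. \<exists>a b. add4 (scal4 a v) (scal4 b w) \<noteq> (0,0,0,0) \<and> P = proj (add4 (scal4 a v) (scal4 b w))}"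

text \<open>Tangent line at P(t): the line through P(t) and P'(t) = (0,1,2t,3t^2)
  (the unique line meeting C with multiplicity two at P(t)); at P(\<infinity>) the
  line through (0,0,0,1) and (0,0,1,0).\<close>
definition tangent_line :: "'a::field \<Rightarrow> 'a vec4 set set" where
  "tangent_line t = span_line (1, t, t^2, t^3) (0, 1, 2*t, 3*t^2)"

definition tangent_line_inf :: "'a::field vec4 set set" where
  "tangent_line_inf = span_line (0, 0, 0, 1) (0, 0, 1, 0)"

definition tangent_lines :: "'a::field vec4 set set set" where
  "tangent_lines = range tangent_line \<union> {tangent_line_inf}"

definition n_osc :: "'a::{field,finite} vec4 set \<Rightarrow> nat" where
  "n_osc P = card {H \<in> osc_planes. on_plane P H}"

definition pt_class :: "nat \<Rightarrow> 'a::{field,finite} vec4 set set" where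
  "pt_class i = (if i = 1 then twisted_cubic
    else if i = 2 then {P \<in> PG3. P \<notin> twisted_cubic \<and> (\<exists>L\<in>tangent_lines. P \<in> L)}
    else if i = 3 then {P \<in> PG3. P \<notin> twisted_cubic \<and> n_osc P = 3}
    else if i = 4 then {P \<in> PG3. P \<notin> twisted_cubic \<and> n_osc P = 1}
    else if i = 5 then {P \<in> PG3. n_osc P = 0}
    else {})"

definition n_cubic :: "'a::{field,finite} vec4 set \<Rightarrow> nat" where
  "n_cubic H = card {P \<in> twisted_cubic. on_plane P H}"

definition pl_class :: "nat \<Rightarrow> 'a::{field,finite} vec4 set set" where
  "pl_class i = (if i = 1 then osc_planes
    else if i = 2 then {H \<in> PG3. n_cubic H = 2}
    else if i = 3 then {H \<in> PG3. n_cubic H = 3}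
    else if i = 4 then {H \<in> PG3. H \<notin> osc_planes \<and> n_cubic H = 1}
    else if i = 5 then {H \<in> PG3. n_cubic H = 0}
    else {})"

definition line_of_planes :: "'a::field vec4 \<Rightarrow> 'a vec4 \<Rightarrow> 'a vec4 set set" where
  "line_of_planes h k = {P \<in> PG3. on_plane P (proj h) \<and> on_plane P (proj k)}"

definition OD0 :: "'a::{field,finite} vec4 set set \<Rightarrow> nat list" where
  "OD0 L = map (\<lambda>i. card (L \<inter> pt_class i)) [1,2,3,4,5]"

definition OD2 :: "'a::{field,finite} vec4 set set \<Rightarrow> nat list" where
  "OD2 L = map (\<lambda>i. card {H \<in> pl_class i. \<forall>P\<in>L. on_plane P H}) [1,2,3,4,5]"

definition is_square :: "'a::field \<Rightarrow> bool" where
  "is_square x \<longleftrightarrow> (\<exists>y. x = y^2)"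

definition ell :: "'a::field \<Rightarrow> 'a vec4 set set" where
  "ell u = line_of_planes (- (u^3), 3 * u^2, - 3 * u, 1) (0, 1, -1, 0)"

end

theory Submission
  imports Defs "HOL-Computational_Algebra.Primes"
begin

text \<open>
  The points of \<open>\<ell>\<^sub>u\<close> are \<open>(1, s, s, u\<^sup>3 + 3u(1-u)s)\<close> and \<open>(0, 1, 1, 3u(1-u))\<close>. Besides
  \<open>\<Pi>(u)\<close>, the osculating planes through the point with parameter \<open>s\<close> are the \<open>\<Pi>(t)\<close> with
  \<open>t\<close> a root of a quadratic of discriminant \<open>(3s + u - 2)\<^sup>2 - 4(u\<^sup>2 - u + 1)\<close>, which never
  vanishes since \<open>u\<^sup>2 - u + 1\<close> is a nonsquare. So every point lies on one or three osculating
  planes (two exactly for the point on a tangent), and the number of points on three is half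
  the number \<open>q - 1\<close> of points of the conic \<open>x\<^sup>2 - y\<^sup>2 = 4(u\<^sup>2 - u + 1)\<close>.

  The planes through \<open>\<ell>\<^sub>u\<close> are \<open>\<Pi>(u)\<close> and \<open>Y\<^sub>1 - Y\<^sub>2 + c \<Pi>(u)\<close>. In the coordinate
  \<open>w = 1/(t - u)\<close> on the twisted cubic the latter cuts out the fibre over \<open>c\<close> of the cubic map
  \<open>w \<mapsto> u(u-1)w\<^sup>3 + (2u-1)w\<^sup>2 + w\<close>, whose derivative has the nonsquare discriminant
  \<open>4(u\<^sup>2 - u + 1)\<close>. Hence all fibres have \<open>0\<close>, \<open>1\<close> or \<open>3\<close> points, and the pairs of distinct
  points in a common fibre, six per fibre of size three, form the conic \<open>x\<^sup>2 + 3y\<^sup>2 = m\<close>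
  (\<open>m \<noteq> 0\<close>), which has \<open>q - 1\<close> or \<open>q + 1\<close> points according as \<open>-3\<close> is a square or not.
\<close>

section \<open>Homogeneous coordinates\<close>

lemma scal4_apply [simp]: "scal4 c (a, b, d, e) = (c*a, c*b, c*d, c*e)"
  by (simp add: scal4_def)

lemma add4_apply [simp]: "add4 (a, b, c, d) (a', b', c', d') = (a+a', b+b', c+c', d+d')"
  by (simp add: add4_def)

lemma dot4_apply [simp]: "dot4 (h0, h1, h2, h3) (y0, y1, y2, y3) = h0*y0 + h1*y1 + h2*y2 + h3*y3"
  by (simp add: dot4_def)

lemma dot4_scal4: "dot4 (scal4 c h) (scal4 d v) = c * d * dot4 h v"
  by (cases h; cases v) (auto simp: algebra_simps)

lemma scal4_neq_0: "e \<noteq> 0 \<Longrightarrow> v \<noteq> (0,0,0,0) \<Longrightarrow> scal4 e v \<noteq> (0,0,0,0)"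
  by (cases v) auto

lemma in_proj_self: "v \<in> proj v"
  unfolding proj_def by (rule CollectI, rule exI[of _ 1]) (cases v, auto)

lemma proj_scal4: "e \<noteq> 0 \<Longrightarrow> proj (scal4 e v) = proj v"
proof -
  assume e: "e \<noteq> 0"
  have mult: "scal4 c (scal4 e v) = scal4 (c*e) v" for c
    by (cases v) (auto simp: algebra_simps)
  show ?thesis unfolding proj_def
  proof (rule set_eqI, rule iffI)
    fix x assume "x \<in> {scal4 c (scal4 e v) |c. c \<noteq> 0}"
    then show "x \<in> {scal4 c v |c. c \<noteq> 0}" using mult e by auto
  next
    fix x assume "x \<in> {scal4 c v |c. c \<noteq> 0}"
    then obtain c where c: "c \<noteq> 0" "x = scal4 c v" by blast
    then have "x = scal4 (c/e) (scal4 e v)" using mult[of "c/e"] e by simp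
    then show "x \<in> {scal4 c (scal4 e v) |c. c \<noteq> 0}" using c e by auto
  qed
qed

lemma proj_eq_iff: "proj v = proj w \<longleftrightarrow> (\<exists>e. e \<noteq> 0 \<and> w = scal4 e v)"
proof
  assume "proj v = proj w"
  then show "\<exists>e. e \<noteq> 0 \<and> w = scal4 e v"
    using in_proj_self[of w] unfolding proj_def by auto
qed (auto simp: proj_scal4)

lemma proj_in_PG3: "v \<noteq> (0,0,0,0) \<Longrightarrow> proj v \<in> PG3"
  unfolding PG3_def by blast

lemma on_plane_proj_iff: "on_plane (proj v) (proj h) \<longleftrightarrow> dot4 h v = 0"
proof
  assume "on_plane (proj v) (proj h)"
  then obtain c e where "c \<noteq> 0" "e \<noteq> 0" "dot4 (scal4 e h) (scal4 c v) = 0"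
    unfolding on_plane_def proj_def by blast
  then show "dot4 h v = 0" by (simp add: dot4_scal4)
next
  assume "dot4 h v = 0"
  then show "on_plane (proj v) (proj h)"
    unfolding on_plane_def using in_proj_self by blast
qed

lemma proj_in_span_line_iff:
  assumes "v \<noteq> (0,0,0,0)"
  shows "proj v \<in> span_line w1 w2 \<longleftrightarrow> (\<exists>a b e. e \<noteq> 0 \<and> add4 (scal4 a w1) (scal4 b w2) = scal4 e v)"
proof
  assume "proj v \<in> span_line w1 w2"
  then obtain a b where "proj v = proj (add4 (scal4 a w1) (scal4 b w2))"
    unfolding span_line_def by blast
  then show "\<exists>a b e. e \<noteq> 0 \<and> add4 (scal4 a w1) (scal4 b w2) = scal4 e v"
    unfolding proj_eq_iff by blast
next
  assume "\<exists>a b e. e \<noteq> 0 \<and> add4 (scal4 a w1) (scal4 b w2) = scal4 e v"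
  then obtain a b e where e: "e \<noteq> 0" "add4 (scal4 a w1) (scal4 b w2) = scal4 e v" by blast
  then have "proj v = proj (add4 (scal4 a w1) (scal4 b w2))"
    using proj_scal4 by metis
  moreover have "add4 (scal4 a w1) (scal4 b w2) \<noteq> (0,0,0,0)"
    using e scal4_neq_0 assms by metis
  ultimately show "proj v \<in> span_line w1 w2"
    unfolding span_line_def using proj_in_PG3 assms by blast
qed

section \<open>Counting in finite fields\<close>

lemma of_nat_prime_neq_0:
  assumes "prime p" and "CHAR('a::{semiring_1, zero_neq_one}) \<noteq> p"
  shows "of_nat p \<noteq> (0::'a)"
proof
  assume "of_nat p = (0::'a)"
  then have "CHAR('a) dvd p" by (simp add: of_nat_eq_0_iff_char_dvd)
  then show False using assms by (auto simp: prime_nat_iff)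
qed

lemma four_neq_0_if_two_neq_0: "(2::'a::field) \<noteq> 0 \<Longrightarrow> (4::'a) \<noteq> 0"
  by (metis mult_2 mult_eq_0_iff numeral_Bit0)

lemma card_option_Collect:
  "card {x::'b::finite option. P x} = card {s. P (Some s)} + (if P None then 1 else 0)"
proof -
  have eq: "{x. P x} = Some ` {s. P (Some s)} \<union> (if P None then {None} else {})"
    by (rule set_eqI, case_tac x) auto
  have "card (Some ` {s. P (Some s)} \<union> (if P None then {None} else {})) =
        card (Some ` {s. P (Some s)}) + card (if P None then {None} else ({}::'b option set))"
    by (rule card_Un_disjoint) auto
  then show ?thesis unfolding eq by (simp add: card_image)
qed

lemma range_option: "range g = insert (g None) (range (\<lambda>t. g (Some t)))"
  by (simp add: UNIV_option_conv image_image)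

lemma card_filter_range_inj:
  assumes "inj f" shows "card {P \<in> range f. Q P} = card {x. Q (f x)}"
proof -
  have "{P \<in> range f. Q P} = f ` {x. Q (f x)}" by auto
  then show ?thesis using inj_on_subset[OF assms subset_UNIV] by (simp add: card_image)
qed

lemma card_square_roots:
  fixes a :: "'a::field"
  assumes two: "(2::'a) \<noteq> 0" and a: "a \<noteq> 0"
  shows "card {y. y^2 = a} = (if is_square a then 2 else 0)"
proof (cases "is_square a")
  case True
  then obtain z where z: "a = z^2" unfolding is_square_def by blast
  then have "{y. y^2 = a} = {z, -z}" by (auto simp: power2_eq_iff)
  moreover have "z \<noteq> -z" using z a two by (auto simp: eq_neg_iff_add_eq_0 simp flip: mult_2)
  ultimately show ?thesis using True by simp
next
  case False
  then have "{y. y^2 = a} = {}" unfolding is_square_def by auto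
  then show ?thesis using False by simp
qed

lemma sum_comp_card_fibres:
  fixes f :: "'a::finite \<Rightarrow> 'b::finite"
  shows "(\<Sum>x\<in>UNIV. g (f x)) = (\<Sum>c\<in>UNIV. of_nat (card {x. f x = c}) * g c)"
proof -
  have "(\<Sum>x\<in>UNIV. g (f x)) = (\<Sum>c\<in>UNIV. \<Sum>x\<in>{x\<in>UNIV. f x = c}. g (f x))"
    by (rule sum.group[symmetric]) auto
  also have "\<dots> = (\<Sum>c\<in>UNIV. of_nat (card {x. f x = c}) * g c)"
    by (intro sum.cong) auto
  finally show ?thesis .
qed

lemma sum_card_fibres:
  fixes f :: "'a::finite \<Rightarrow> 'b::finite"
  shows "(\<Sum>c\<in>UNIV. card {x. f x = c}) = card (UNIV::'a set)"
  using sum_comp_card_fibres[of "\<lambda>_. 1::nat" f] by simp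

lemma card_norm_level_square:
  fixes d m e :: "'a::{field,finite}"
  assumes two: "(2::'a) \<noteq> 0" and e: "e \<noteq> 0" and d: "d = e^2" and m: "m \<noteq> 0"
  shows "card {(x,y). x^2 - d*y^2 = m} = card (UNIV::'a set) - 1"
proof -
  let ?C = "{(x,y). x^2 - d*y^2 = m}"
  have four: "(4::'a) \<noteq> 0" "(16::'a) \<noteq> 0"
    using four_neq_0_if_two_neq_0[OF two] by (simp, metis mult_eq_0_iff num_double numeral_times_numeral)
  let ?H = "{(a,b). a*b = m}"
  have bij: "bij_betw (\<lambda>(x,y). (x - e*y, x + e*y)) ?C ?H"
  proof (rule bij_betw_byWitness[where f'="\<lambda>(a,b). ((a+b)/2, (b-a)/(2*e))"])
    show "\<forall>p\<in>?C. (\<lambda>(a,b). ((a+b)/2, (b-a)/(2*e))) ((\<lambda>(x,y). (x - e*y, x + e*y)) p) = p"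
      using two e by (auto simp: field_simps)
    show "\<forall>p\<in>?H. (\<lambda>(x,y). (x - e*y, x + e*y)) ((\<lambda>(a,b). ((a+b)/2, (b-a)/(2*e))) p) = p"
      using two four e by (auto simp: field_simps)
    show "(\<lambda>(x,y). (x - e*y, x + e*y)) ` ?C \<subseteq> ?H"
      using d by (auto simp: algebra_simps power2_eq_square)
    show "(\<lambda>(a,b). ((a+b)/2, (b-a)/(2*e))) ` ?H \<subseteq> ?C"
    proof
      fix p assume "p \<in> (\<lambda>(a,b). ((a+b)/2, (b-a)/(2*e))) ` ?H"
      then obtain a b where ab: "a*b = m" "p = ((a+b)/2, (b-a)/(2*e))" by auto
      have "((a+b)/2)^2 - d*((b-a)/(2*e))^2 = a*b"
        using two four e d by (simp add: field_simps power2_eq_square)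
      then show "p \<in> ?C" using ab by simp
    qed
  qed
  have "?H = (\<lambda>a. (a, m/a)) ` (UNIV - {0})"
  proof (rule set_eqI)
    fix p :: "'a \<times> 'a" obtain a b where p: "p = (a,b)" by (cases p)
    show "p \<in> ?H \<longleftrightarrow> p \<in> (\<lambda>a. (a, m/a)) ` (UNIV - {0})"
      using m unfolding p by (auto simp: field_simps split: if_splits)
  qed
  moreover have "inj_on (\<lambda>a. (a, m/a)) (UNIV - {0})" by (auto simp: inj_on_def)
  ultimately have "card ?H = card (UNIV::'a set) - 1"
    by (simp add: card_image card_Diff_singleton)
  then show ?thesis using bij_betw_same_card[OF bij] by simp
qed

text \<open>Parametrisation of \<open>x\<^sup>2 - d y\<^sup>2 = 1\<close> by the slope \<open>t\<close> of the line through \<open>(-1, 0)\<close>.\<close>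

definition norm_one_param :: "'a::field \<Rightarrow> 'a \<Rightarrow> 'a \<times> 'a" where
  "norm_one_param d t = ((1 + d*t^2)/(1 - d*t^2), 2*t/(1 - d*t^2))"

lemma nonsquare_neq_0: "\<not> is_square d \<Longrightarrow> d \<noteq> 0"
  unfolding is_square_def by (metis zero_power2)

lemma one_minus_nonsquare_neq_0:
  assumes "\<not> is_square d" shows "1 - d*t^2 \<noteq> 0"
proof
  assume h: "1 - d*t^2 = 0"
  then have "d = (1/t)^2" by (cases "t = 0") (simp_all add: field_simps power2_eq_square)
  then show False using assms unfolding is_square_def by blast
qed

lemma norm_one_param_in_level_1:
  fixes d t :: "'a::field"
  assumes "\<not> is_square d"
  shows "norm_one_param d t \<in> {(x,y). x^2 - d*y^2 = 1}"
proof -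
  have "(1 + d*t^2)^2 - d*(2*t)^2 = (1 - d*t^2)^2"
    by (simp add: algebra_simps power2_eq_square)
  moreover have "((1 + d*t^2)/(1 - d*t^2))^2 - d*(2*t/(1 - d*t^2))^2
      = ((1 + d*t^2)^2 - d*(2*t)^2)/(1 - d*t^2)^2"
    by (simp only: power_divide power_mult_distrib times_divide_eq_right diff_divide_distrib)
  ultimately show ?thesis
    using one_minus_nonsquare_neq_0[OF assms, of t] by (simp add: norm_one_param_def)
qed

lemma norm_one_param_inverse:
  fixes d t :: "'a::field"
  assumes "(2::'a) \<noteq> 0" and "\<not> is_square d"
  shows "snd (norm_one_param d t) / (fst (norm_one_param d t) + 1) = t"
proof -
  have nz: "1 - d*t^2 \<noteq> 0" by (rule one_minus_nonsquare_neq_0[OF assms(2)])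
  then have "fst (norm_one_param d t) + 1 = 2 / (1 - d*t^2)"
    unfolding norm_one_param_def by (simp add: field_simps)
  then show ?thesis using nz assms(1) unfolding norm_one_param_def by (simp add: field_simps)
qed

lemma norm_one_param_onto:
  fixes d x y :: "'a::field"
  assumes two: "(2::'a) \<noteq> 0" and ns: "\<not> is_square d"
    and eq: "x^2 - d*y^2 = 1" and x: "x \<noteq> -1"
  shows "norm_one_param d (y/(x+1)) = (x, y)"
proof -
  have x1: "x + 1 \<noteq> 0" using x eq_neg_iff_add_eq_0 by blast
  define t where "t = y/(x+1)"
  have a: "1 - d*t^2 = 2/(x+1)"
  proof -
    have "1 - d*t^2 = ((x+1)^2 - d*y^2)/(x+1)^2" using x1 unfolding t_def by (simp add: field_simps)
    also have "(x+1)^2 - d*y^2 = 2*(x+1)" using eq by (simp add: algebra_simps power2_eq_square)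
    also have "(2*(x+1))/(x+1)^2 = 2/(x+1)"
      unfolding power2_eq_square using nonzero_mult_divide_mult_cancel_right[OF x1, of 2 "x+1"] .
    finally show ?thesis .
  qed
  have "2*t/(1 - d*t^2) = t*(x+1)"
    unfolding a using two x1 by simp
  then have "2*t/(1 - d*t^2) = y"
    unfolding t_def using x1 by simp
  moreover have "(1 + d*t^2)/(1 - d*t^2) = x"
  proof -
    have "(1 + d*t^2)/(1 - d*t^2) = 2/(1 - d*t^2) - 1"
      using one_minus_nonsquare_neq_0[OF ns, of t] by (simp add: field_simps)
    also have "\<dots> = x" unfolding a using x1 two by (simp add: field_simps)
    finally show ?thesis .
  qed
  ultimately show ?thesis unfolding norm_one_param_def t_def by simp
qed

lemma card_norm_level_1_nonsquare:
  fixes d :: "'a::{field,finite}"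
  assumes two: "(2::'a) \<noteq> 0" and ns: "\<not> is_square d"
  shows "card {(x,y). x^2 - d*y^2 = 1} = card (UNIV::'a set) + 1"
proof -
  let ?C = "{(x::'a,y). x^2 - d*y^2 = 1}" and ?\<psi> = "norm_one_param d"
  have "inj ?\<psi>" by (metis injI norm_one_param_inverse[OF two ns])
  have "(-1, 0) \<notin> range ?\<psi>"
  proof
    assume "(-1, 0) \<in> range ?\<psi>"
    then obtain t where t: "?\<psi> t = (-1, 0)" by auto
    then have "t = 0" using norm_one_param_inverse[OF two ns, of t] by simp
    then show False using t two by (simp add: norm_one_param_def eq_neg_iff_add_eq_0)
  qed
  moreover have "?C = insert (-1, 0) (range ?\<psi>)"
  proof (rule equalityI)
    show "?C \<subseteq> insert (-1, 0) (range ?\<psi>)"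
    proof
      fix p assume "p \<in> ?C"
      moreover obtain x y where p: "p = (x, y)" by (cases p)
      moreover have "y = 0" if "x = -1" "x^2 - d*y^2 = 1"
        using that nonsquare_neq_0[OF ns] by simp
      ultimately show "p \<in> insert (-1, 0) (range ?\<psi>)"
        using norm_one_param_onto[OF two ns] by (cases "x = -1") (auto, metis rangeI)
    qed
    have "range ?\<psi> \<subseteq> ?C"
      by (rule image_subsetI) (rule norm_one_param_in_level_1[OF ns])
    then show "insert (-1, 0) (range ?\<psi>) \<subseteq> ?C" by simp
  qed
  ultimately have "card ?C = card (range ?\<psi>) + 1" by simp
  also have "card (range ?\<psi>) = card (UNIV::'a set)" using \<open>inj ?\<psi>\<close> card_image by blast
  finally show ?thesis .
qed

lemma norm_form_mult:
  "(a*c + d*b*e)^2 - d*(a*e + b*c)^2 = (a^2 - d*b^2) * (c^2 - d*e^2)"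
  for a b c d e :: "'a::comm_ring_1"
  by (simp add: algebra_simps power2_eq_square)

lemma card_norm_level_eq_card_norm_level_1:
  fixes d m :: "'a::{field,finite}"
  assumes m: "m \<noteq> 0" and p0: "x0^2 - d*y0^2 = m"
  shows "card {(x,y). x^2 - d*y^2 = m} = card {(x,y). x^2 - d*y^2 = (1::'a)}"
proof -
  let ?C1 = "{(x::'a,y). x^2 - d*y^2 = 1}" and ?Cm = "{(x::'a,y). x^2 - d*y^2 = m}"
  define g where "g = (\<lambda>(x,y). (x*x0 + d*y*y0, x*y0 + y*x0))"
  define h where "h = (\<lambda>(X,Y). ((X*x0 - d*Y*y0)/m, (Y*x0 - X*y0)/m))"
  have divide_norm: "(a/m)^2 - d*(b/m)^2 = (a^2 - d*b^2)/m^2" for a b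
    by (simp add: power_divide diff_divide_distrib)
  have hg: "h (g p) = p" for p
  proof -
    obtain x y where p: "p = (x,y)" by (cases p)
    have "(x*x0 + d*y*y0)*x0 - d*(x*y0 + y*x0)*y0 = x*(x0^2 - d*y0^2)"
      by (simp add: algebra_simps power2_eq_square)
    moreover have "(x*y0 + y*x0)*x0 - (x*x0 + d*y*y0)*y0 = y*(x0^2 - d*y0^2)"
      by (simp add: algebra_simps power2_eq_square)
    ultimately show ?thesis using m p0 unfolding p g_def h_def by simp
  qed
  have gh: "g (h p) = p" for p
  proof -
    obtain X Y where p: "p = (X,Y)" by (cases p)
    have "(X*x0 - d*Y*y0)*x0 + d*(Y*x0 - X*y0)*y0 = X*(x0^2 - d*y0^2)"
      by (simp add: algebra_simps power2_eq_square)
    moreover have "(X*x0 - d*Y*y0)*y0 + (Y*x0 - X*y0)*x0 = Y*(x0^2 - d*y0^2)"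
      by (simp add: algebra_simps power2_eq_square)
    ultimately have "(X*x0 - d*Y*y0)/m*x0 + d*((Y*x0 - X*y0)/m)*y0 = X"
       and "(X*x0 - d*Y*y0)/m*y0 + (Y*x0 - X*y0)/m*x0 = Y"
      using m p0 by (simp_all add: field_simps)
    then show ?thesis unfolding p g_def h_def by (simp add: mult.assoc)
  qed
  have "bij_betw g ?C1 ?Cm"
  proof (rule bij_betw_byWitness[where f'=h])
    show "\<forall>a\<in>?C1. h (g a) = a" using hg by blast
    show "\<forall>a\<in>?Cm. g (h a) = a" using gh by blast
    show "g ` ?C1 \<subseteq> ?Cm" using p0 by (auto simp: g_def norm_form_mult)
    show "h ` ?Cm \<subseteq> ?C1"
    proof
      fix p assume "p \<in> h ` ?Cm"
      then obtain X Y where XY: "X^2 - d*Y^2 = m" "p = h (X,Y)" by auto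
      have "(X*x0 - d*Y*y0)^2 - d*(Y*x0 - X*y0)^2 = (X^2 - d*Y^2)*(x0^2 - d*y0^2)"
        by (simp add: algebra_simps power2_eq_square)
      then have i: "(X*x0 - d*Y*y0)^2 - d*(Y*x0 - X*y0)^2 = m*m" using XY p0 by simp
      have "((X*x0 - d*Y*y0)/m)^2 - d*((Y*x0 - X*y0)/m)^2 = ((X*x0 - d*Y*y0)^2 - d*(Y*x0 - X*y0)^2)/m^2"
        using divide_norm by blast
      also have "\<dots> = 1" using i m by (simp add: power2_eq_square)
      finally have "((X*x0 - d*Y*y0)/m)^2 - d*((Y*x0 - X*y0)/m)^2 = 1" .
      then show "p \<in> ?C1" using XY unfolding h_def by simp
    qed
  qed
  then show ?thesis using bij_betw_same_card by metis
qed

lemma norm_level_0_nonsquare: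
  fixes d :: "'a::field"
  assumes "\<not> is_square d"
  shows "{(x,y). x^2 - d*y^2 = 0} = {(0,0)}"
proof -
  have "x = 0 \<and> y = 0" if h: "x^2 - d*y^2 = 0" for x y
  proof (rule ccontr)
    assume "\<not> (x = 0 \<and> y = 0)"
    then have "y \<noteq> 0" using h by auto
    then have "d = (x/y)^2" using h by (simp add: field_simps power2_eq_square)
    then show False using assms unfolding is_square_def by blast
  qed
  then show ?thesis by auto
qed

text \<open>Every nonzero level of a nonsquare norm form is hit: the nonempty nonzero levels all have
  \<open>q + 1\<close> points, level \<open>0\<close> has one, and together they partition the \<open>q\<^sup>2\<close> pairs.\<close>

lemma card_norm_level_nonsquare:
  fixes d m :: "'a::{field,finite}"
  assumes two: "(2::'a) \<noteq> 0" and ns: "\<not> is_square d" and m: "m \<noteq> 0"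
  shows "card {(x,y). x^2 - d*y^2 = m} = card (UNIV::'a set) + 1"
proof -
  define C where "C m = {(x::'a,y). x^2 - d*y^2 = m}" for m
  define q where "q = card (UNIV::'a set)"
  define M where "M = {m. m \<noteq> 0 \<and> C m \<noteq> {}}"
  have Cm: "card (C m) = q + 1" if "m \<in> M" for m
  proof -
    from that obtain x0 y0 where "m \<noteq> 0" "x0^2 - d*y0^2 = m" unfolding M_def C_def by auto
    then show ?thesis unfolding C_def q_def
      using card_norm_level_eq_card_norm_level_1 card_norm_level_1_nonsquare[OF two ns] by metis
  qed
  have "q*q = (\<Sum>m\<in>UNIV. card (C m))"
    using sum_card_fibres[of "\<lambda>(x,y). x^2 - d*y^2"]
    by (simp add: C_def q_def case_prod_unfold flip: UNIV_Times_UNIV)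
  also have "\<dots> = card (C 0) + (\<Sum>m\<in>UNIV - {0}. card (C m))"
    by (simp add: sum.remove)
  also have "(\<Sum>m\<in>UNIV - {0}. card (C m)) = (\<Sum>m\<in>UNIV - {0}. if m \<in> M then q + 1 else 0)"
    by (intro sum.cong) (auto simp: M_def Cm)
  also have "\<dots> = (q+1) * card M"
  proof -
    have "(UNIV - {0}) \<inter> M = M" by (auto simp: M_def)
    then show ?thesis by (simp add: sum.If_cases algebra_simps)
  qed
  finally have "q*q = 1 + (q+1) * card M"
    using norm_level_0_nonsquare[OF ns] by (simp add: C_def)
  moreover have "q \<ge> 1" unfolding q_def by (simp add: Suc_le_eq finite_UNIV_card_ge_0)
  moreover have "(q+1)*(q-1) + 1 = q*q" using \<open>q \<ge> 1\<close> by (cases q) auto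
  ultimately have "(q+1) * card M = (q+1) * (q-1)" by linarith
  then have "card M = q - 1" by (metis add_gr_0 less_numeral_extra(1) mult_cancel1 not_gr0)
  then have "card M = card (UNIV - {0::'a})"
    by (simp add: card_Diff_singleton q_def)
  then have "M = UNIV - {0}"
    by (intro card_subset_eq) (auto simp: M_def)
  then show ?thesis using Cm m unfolding C_def q_def by blast
qed

lemma card_norm_level:
  fixes d m :: "'a::{field,finite}"
  assumes two: "(2::'a) \<noteq> 0" and d: "d \<noteq> 0" and m: "m \<noteq> 0"
  shows "card {(x,y). x^2 - d*y^2 = m} =
    (if is_square d then card (UNIV::'a set) - 1 else card (UNIV::'a set) + 1)"
proof (cases "is_square d")
  case True
  then obtain e where e: "d = e^2" unfolding is_square_def by blast
  then have "e \<noteq> 0" using d by auto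
  then show ?thesis using card_norm_level_square[OF two _ e m] True by simp
next
  case False then show ?thesis using card_norm_level_nonsquare[OF two False m] by simp
qed

lemma card_squares_minus_nonsquare:
  fixes m :: "'a::{field,finite}"
  assumes two: "(2::'a) \<noteq> 0" and m: "\<not> is_square m"
  shows "2 * card {x. is_square (x^2 - m)} = card (UNIV::'a set) - 1"
proof -
  have "x^2 - m \<noteq> 0" for x using m unfolding is_square_def by auto
  then have roots: "card {y. y^2 = x^2 - m} = (if is_square (x^2 - m) then 2 else 0)" for x
    using card_square_roots[OF two] by blast
  have "{(x,y). x^2 - 1*y^2 = m} = Sigma UNIV (\<lambda>x. {y. y^2 = x^2 - m})"
    by (auto simp: algebra_simps)
  then have "card {(x,y). x^2 - 1*y^2 = m} = (\<Sum>x\<in>UNIV. if is_square (x^2 - m) then 2 else 0)"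
    by (simp add: roots)
  also have "\<dots> = 2 * card {x. is_square (x^2 - m)}" by (simp add: sum.If_cases)
  finally show ?thesis
    using card_norm_level[OF two one_neq_zero] nonsquare_neq_0[OF m]
    by (simp add: is_square_def exI[of _ 1])
qed

lemma sum_if_eq_card: "(\<Sum>c\<in>UNIV. if P c then (k::nat) else 0) = k * card {c::'a::finite. P c}"
  by (simp add: sum.If_cases)

lemma card_fibre_classes:
  fixes f :: "'a::finite \<Rightarrow> 'b::finite"
  defines "n c \<equiv> card {x. f x = c}"
  assumes n: "\<And>c. n c \<in> {0, 1, 3}"
  shows "3 * card {c. n c = 3} + card {c. n c = 1} = card (UNIV::'a set)"
    and "card {c. n c = 0} + card {c. n c = 1} + card {c. n c = 3} = card (UNIV::'b set)"
    and "card {(x,y). x \<noteq> y \<and> f x = f y} = 6 * card {c. n c = 3}"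
proof -
  have sum_n: "(\<Sum>c\<in>UNIV. g (n c)) =
      g 0 * card {c. n c = 0} + g 1 * card {c. n c = 1} + g 3 * card {c. n c = 3}"
    for g :: "nat \<Rightarrow> nat"
  proof -
    have "(\<Sum>c\<in>UNIV. g (n c)) = (\<Sum>c\<in>UNIV. (if n c = 0 then g 0 else 0)
        + (if n c = 1 then g 1 else 0) + (if n c = 3 then g 3 else 0))"
    proof (rule sum.cong[OF refl])
      fix c show "g (n c) = (if n c = 0 then g 0 else 0) + (if n c = 1 then g 1 else 0)
          + (if n c = 3 then g 3 else 0)"
        using n[of c] by auto
    qed
    then show ?thesis by (simp only: sum.distrib sum_if_eq_card mult.commute)
  qed
  show "3 * card {c. n c = 3} + card {c. n c = 1} = card (UNIV::'a set)"
    using sum_n[of id] sum_card_fibres[of f] by (simp add: n_def)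
  show "card {c. n c = 0} + card {c. n c = 1} + card {c. n c = 3} = card (UNIV::'b set)"
    using sum_n[of "\<lambda>_. 1"] by simp
  have "{(x,y). x \<noteq> y \<and> f x = f y} = Sigma UNIV (\<lambda>x. {y. f y = f x} - {x})"
    by auto
  then have "card {(x,y). x \<noteq> y \<and> f x = f y} = (\<Sum>x\<in>UNIV. n (f x) - 1)"
    by (simp add: n_def card_Diff_singleton)
  also have "\<dots> = (\<Sum>c\<in>UNIV. n c * (n c - 1))"
    using sum_comp_card_fibres[of "\<lambda>c. n c - 1" f] by (simp add: n_def)
  finally show "card {(x,y). x \<noteq> y \<and> f x = f y} = 6 * card {c. n c = 3}"
    using sum_n[of "\<lambda>k. k * (k - 1)"] by simp
qed

lemma fibre_class_counts_div:
  fixes q t0 t1 t3 :: nat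
  assumes "3*t3 + t1 = q" and "t0 + t1 + t3 = q"
  shows "6*t3 = q - 1 \<Longrightarrow> q \<ge> 1 \<Longrightarrow>
           t3 = (q - 1) div 6 \<and> t1 = (q + 1) div 2 \<and> t0 = (q - 1) div 3"
    and "6*t3 = q + 1 \<Longrightarrow> t3 = (q + 1) div 6 \<and> t1 = (q - 1) div 2 \<and> t0 = (q + 1) div 3"
proof -
  assume "6*t3 = q - 1" "q \<ge> 1"
  then have "q = 6*t3 + 1" "t1 = 3*t3 + 1" "t0 = 2*t3" using assms by linarith+
  moreover have "(6*t3 + 1 + 1) div 2 = 3*t3 + 1" by simp
  ultimately show "t3 = (q - 1) div 6 \<and> t1 = (q + 1) div 2 \<and> t0 = (q - 1) div 3" by simp
next
  assume "6*t3 = q + 1"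
  then have "q = 6*t3 - 1" "t3 \<ge> 1" "t1 = 3*t3 - 1" "t0 = 2*t3" using assms by linarith+
  moreover have "(6*t3 - 1 - 1) div 2 = 3*t3 - 1" by simp
  ultimately show "t3 = (q + 1) div 6 \<and> t1 = (q - 1) div 2 \<and> t0 = (q + 1) div 3" by simp
qed

section \<open>Cubic maps without critical points\<close>

text \<open>\<open>chord a b\<close> is the difference quotient of \<open>cubic\<close> and \<open>chord w w\<close> its derivative, whose
  discriminant is \<open>4 (B\<^sup>2 - 3 A C)\<close>.\<close>

locale critical_free_cubic =
  fixes A B C :: "'a::field"
  assumes leading_neq_0: "A \<noteq> 0" and disc_nonsquare: "\<not> is_square (B^2 - 3*A*C)"
begin

definition cubic :: "'a \<Rightarrow> 'a" where
  "cubic w = A*w^3 + B*w^2 + C*w"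

definition chord :: "'a \<Rightarrow> 'a \<Rightarrow> 'a" where
  "chord a b = A*(a^2 + a*b + b^2) + B*(a + b) + C"

lemma cubic_diff: "cubic a - cubic b = (a - b) * chord a b"
  unfolding cubic_def chord_def by (simp add: algebra_simps power2_eq_square power3_eq_cube)

lemma chord_commute: "chord a b = chord b a"
  unfolding chord_def by (simp add: algebra_simps)

lemma chord_diff: "chord a w - chord a b = (w - b) * (A*(w + a + b) + B)"
  unfolding chord_def by (simp add: algebra_simps power2_eq_square)

lemma chord_diag_neq_0: "chord w w \<noteq> 0"
proof
  assume "chord w w = 0"
  moreover have "3*A*chord w w = (3*A*w + B)^2 - (B^2 - 3*A*C)"
    unfolding chord_def by (simp add: algebra_simps power2_eq_square)
  ultimately have "B^2 - 3*A*C = (3*A*w + B)^2" by simp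
  then show False using disc_nonsquare unfolding is_square_def by blast
qed

lemma cubic_eq_iff: "cubic a = cubic b \<longleftrightarrow> a = b \<or> chord a b = 0"
  using cubic_diff[of a b] by (metis eq_iff_diff_eq_0 mult_eq_0_iff)

lemma cubic_fibre_of_two_points:
  assumes ab: "a \<noteq> b" "cubic a = cubic b"
  defines "r \<equiv> - (a + b) - B/A"
  shows "{w. cubic w = cubic a} = {a, b, r}" and "r \<noteq> a" and "r \<noteq> b"
proof -
  \<comment> \<open>the roots of \<open>chord a\<close> are \<open>b\<close> and \<open>r\<close>, by Vieta\<close>
  have "chord a b = 0" using ab cubic_eq_iff by blast
  have r: "A*(r + a + b) + B = 0" unfolding r_def using leading_neq_0 by (simp add: field_simps)
  have chord_a: "chord a w = 0 \<longleftrightarrow> w = b \<or> w = r" for w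
  proof -
    have "A*(w + a + b) + B = A*(w - r)" using r by (simp add: algebra_simps)
    then have "chord a w = (w - b) * (A*(w - r))"
      using chord_diff[of a w b] \<open>chord a b = 0\<close> by simp
    then show ?thesis using leading_neq_0 by simp
  qed
  show "r \<noteq> a" using chord_a[of a] chord_diag_neq_0[of a] by auto
  have "A*(r + b + a) + B = 0" using r by (simp add: ac_simps)
  then have "chord b r = chord b a" using chord_diff[of b r a] by simp
  then have "chord b r = 0" using chord_commute[of a b] \<open>chord a b = 0\<close> by simp
  then show "r \<noteq> b" using chord_diag_neq_0[of b] by auto
  show "{w. cubic w = cubic a} = {a, b, r}"
    using chord_a cubic_eq_iff chord_commute ab(2) by auto
qed

lemma card_cubic_fibre: "card {w. cubic w = c} \<in> {0, 1, 3}"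
proof (cases "\<exists>a b. a \<noteq> b \<and> cubic a = c \<and> cubic b = c")
  case True
  then obtain a b where "a \<noteq> b" "cubic a = c" "cubic b = c" by blast
  then show ?thesis using cubic_fibre_of_two_points[of a b] by auto
next
  case False
  then have "{w. cubic w = c} = {} \<or> (\<exists>a. {w. cubic w = c} = {a})" by blast
  then show ?thesis by auto
qed

lemma chord_as_norm_form:
  assumes "(3::'a) \<noteq> 0"
  defines "k \<equiv> 2*B/(3*A)" and "m \<equiv> 4*(B^2 - 3*A*C)/(3*A^2)"
  shows "(a - b)^2 - (-3)*(a + b + k)^2 - m = (4/A) * chord a b"
proof -
  have nz: "3*A^2 \<noteq> 0" using leading_neq_0 assms(1) by simp
  have "3*A*k = 2*B" "3*A^2*m = 4*(B^2 - 3*A*C)"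
    unfolding k_def m_def using leading_neq_0 assms(1) by simp_all
  then have "3*A^2 * ((a - b)^2 - (-3)*(a + b + k)^2 - m) = 12*A * chord a b"
    unfolding chord_def by algebra
  also have "\<dots> = 3*A^2 * ((4/A) * chord a b)" using leading_neq_0 by (simp add: power2_eq_square)
  finally show ?thesis by (rule mult_left_cancel[OF nz, THEN iffD1])
qed

end

text \<open>The collisions \<open>cubic a = cubic b\<close>, \<open>a \<noteq> b\<close>, form the affine conic \<open>chord a b = 0\<close>,
  which becomes a level set of the norm form \<open>x\<^sup>2 + 3 y\<^sup>2\<close>.\<close>

locale finite_critical_free_cubic = critical_free_cubic A B C for A B C :: "'a::{field,finite}"
begin

lemma card_cubic_collisions:
  assumes two: "(2::'a) \<noteq> 0" and three: "(3::'a) \<noteq> 0"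
  shows "card {(a,b). a \<noteq> b \<and> cubic a = cubic b} =
    (if is_square (-3::'a) then card (UNIV::'a set) - 1 else card (UNIV::'a set) + 1)"
proof -
  define k where "k = 2*B/(3*A)"
  define m where "m = 4*(B^2 - 3*A*C)/(3*A^2)"
  have four: "(4::'a) \<noteq> 0" using four_neq_0_if_two_neq_0[OF two] .
  have "B^2 - 3*A*C \<noteq> 0" using disc_nonsquare nonsquare_neq_0 by blast
  then have m0: "m \<noteq> 0" unfolding m_def using two three leading_neq_0
    by (metis divide_eq_0_iff mult_eq_0_iff numeral_Bit0 mult_2 power_eq_0_iff)
  have on_conic: "a \<noteq> b \<and> cubic a = cubic b \<longleftrightarrow> (a - b)^2 - (-3)*(a + b + k)^2 = m" for a b
  proof -
    have "a \<noteq> b \<and> cubic a = cubic b \<longleftrightarrow> chord a b = 0"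
      using cubic_eq_iff chord_diag_neq_0 by blast
    moreover have "(a - b)^2 - (-3)*(a + b + k)^2 - m = (4/A) * chord a b"
      unfolding k_def m_def using chord_as_norm_form[OF three] .
    moreover have "4/A \<noteq> 0" using four leading_neq_0 by simp
    ultimately show ?thesis by (metis eq_iff_diff_eq_0 mult_eq_0_iff)
  qed
  have "bij_betw (\<lambda>(a,b). (a - b, a + b + k)) {(a,b). a \<noteq> b \<and> cubic a = cubic b}
      {(x,y). x^2 - (-3)*y^2 = m}"
  proof (rule bij_betw_byWitness[where f'="\<lambda>(x,y). ((x + y - k)/2, (y - k - x)/2)"])
    have inv: "(x + y - k)/2 - (y - k - x)/2 = x" "(x + y - k)/2 + (y - k - x)/2 + k = y" for x y
      using two four by (simp_all add: field_simps)
    then show "(\<lambda>(x,y). ((x + y - k)/2, (y - k - x)/2)) ` {(x,y). x^2 - (-3)*y^2 = m}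
        \<subseteq> {(a,b). a \<noteq> b \<and> cubic a = cubic b}"
      using on_conic by auto
  qed (use two four on_conic in \<open>auto simp: field_simps\<close>)
  then have "card {(a,b). a \<noteq> b \<and> cubic a = cubic b} = card {(x,y). x^2 - (-3)*y^2 = m}"
    by (rule bij_betw_same_card)
  also have "\<dots> = (if is_square (-3::'a) then card (UNIV::'a set) - 1 else card (UNIV::'a set) + 1)"
  proof -
    have "(-3::'a) \<noteq> 0" using three by simp
    from card_norm_level[OF two this m0] show ?thesis .
  qed
  finally show ?thesis .
qed

end

section \<open>The twisted cubic and its osculating planes\<close>

text \<open>Points of the twisted cubic and osculating planes are indexed by \<open>'a option\<close>, with \<open>None\<close>
  standing for the parameter \<open>\<infinity>\<close>; the same convention is used for \<open>\<ell>\<^sub>u\<close> and its pencil of planes.\<close>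

definition cubic_vec :: "'a::field option \<Rightarrow> 'a vec4" where
  "cubic_vec x = (case x of Some t \<Rightarrow> (1, t, t^2, t^3) | None \<Rightarrow> (0,0,0,1))"

definition osc_vec :: "'a::field option \<Rightarrow> 'a vec4" where
  "osc_vec x = (case x of Some t \<Rightarrow> (- (t^3), 3 * t^2, - 3 * t, 1) | None \<Rightarrow> (1,0,0,0))"

lemma cubic_vec_simps [simp]: "cubic_vec (Some t) = (1, t, t^2, t^3)" "cubic_vec None = (0,0,0,1)"
  by (auto simp: cubic_vec_def)

lemma osc_vec_simps [simp]: "osc_vec (Some t) = (- (t^3), 3 * t^2, - 3 * t, 1)" "osc_vec None = (1,0,0,0)"
  by (auto simp: osc_vec_def)

lemma twisted_cubic_eq_range: "twisted_cubic = range (\<lambda>x. proj (cubic_vec x))"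
  unfolding twisted_cubic_def cubic_pt_def[abs_def] cubic_pt_inf_def
    range_option[of "\<lambda>x. proj (cubic_vec x)"] by auto

lemma osc_planes_eq_range: "osc_planes = range (\<lambda>x. proj (osc_vec x))"
  unfolding osc_planes_def osc_plane_def[abs_def] osc_plane_inf_def
    range_option[of "\<lambda>x. proj (osc_vec x)"] by auto

lemma inj_proj_cubic_vec: "inj (\<lambda>x::'a::field option. proj (cubic_vec x))"
proof (rule injI)
  fix x y :: "'a option" assume "proj (cubic_vec x) = proj (cubic_vec y)"
  then obtain e where e: "e \<noteq> 0" "cubic_vec y = scal4 e (cubic_vec x)"
    unfolding proj_eq_iff by blast
  show "x = y"
    using e by (cases x; cases y) auto
qed

lemma inj_proj_osc_vec:
  assumes three: "(3::'a::field) \<noteq> 0"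
  shows "inj (\<lambda>x::'a option. proj (osc_vec x))"
proof (rule injI)
  fix x y :: "'a option" assume "proj (osc_vec x) = proj (osc_vec y)"
  then obtain e where e: "e \<noteq> 0" "osc_vec y = scal4 e (osc_vec x)"
    unfolding proj_eq_iff by blast
  show "x = y"
    using e three by (cases x; cases y) auto
qed

lemma osc_vec_neq_0: "osc_vec x \<noteq> (0,0,0,0)" by (cases x) auto

lemma n_cubic_proj: "n_cubic (proj g) = card {x. dot4 g (cubic_vec x) = 0}"
  unfolding n_cubic_def twisted_cubic_eq_range card_filter_range_inj[OF inj_proj_cubic_vec]
    on_plane_proj_iff ..

lemma n_osc_proj:
  assumes three: "(3::'a::{field,finite}) \<noteq> 0"
  shows "n_osc (proj (v::'a vec4)) = card {x. dot4 (osc_vec x) v = 0}"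
  unfolding n_osc_def osc_planes_eq_range card_filter_range_inj[OF inj_proj_osc_vec[OF three]]
    on_plane_proj_iff ..

section \<open>The points of \<open>\<ell>\<^sub>u\<close>\<close>

locale ell_nonsquare =
  fixes u :: "'a::{field,finite}"
  assumes two: "(2::'a) \<noteq> 0" and three: "(3::'a) \<noteq> 0"
    and nonsquare: "\<not> is_square (u^2 - u + 1)"
begin

lemma u_neq_0: "u \<noteq> 0"
  using nonsquare unfolding is_square_def by (metis add_0 diff_self one_power2 power_zero_numeral)

lemma u_neq_1: "u \<noteq> 1"
  using nonsquare unfolding is_square_def by (metis diff_self diff_add_cancel one_power2 power_one)

lemma four_neq_0: "(4::'a) \<noteq> 0"
  using four_neq_0_if_two_neq_0[OF two] .

definition ell_vec :: "'a option \<Rightarrow> 'a vec4" where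
  "ell_vec x = (case x of Some s \<Rightarrow> (1, s, s, u^3 + 3*u*(1-u)*s) | None \<Rightarrow> (0, 1, 1, 3*u*(1-u)))"

lemma ell_vec_simps [simp]:
  "ell_vec (Some s) = (1, s, s, u^3 + 3*u*(1-u)*s)" "ell_vec None = (0,1,1,3*u*(1-u))"
  by (auto simp: ell_vec_def)

lemma ell_vec_neq_0: "ell_vec x \<noteq> (0,0,0,0)" by (cases x) auto

lemma ell_eq_range: "ell u = range (\<lambda>x. proj (ell_vec x))"
proof (rule set_eqI, rule iffI)
  fix P assume "P \<in> ell u"
  then obtain v where v: "v \<noteq> (0,0,0,0)" "P = proj v"
      "on_plane (proj v) (proj (- (u^3), 3 * u^2, - 3 * u, 1))" "on_plane (proj v) (proj (0, 1, -1, 0))"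
    unfolding ell_def line_of_planes_def PG3_def by blast
  then have v34: "dot4 (- (u^3), 3 * u^2, - 3 * u, 1) v = 0" "dot4 (0, 1, -1, 0) v = 0"
    unfolding on_plane_proj_iff by blast+
  obtain a b c d where abcd: "v = (a,b,c,d)" by (cases v)
  have bc: "c = b" using v34(2) abcd by simp
  have dd: "d = u^3*a + 3*u*(1-u)*b"
    using v34(1) abcd bc by (simp add: algebra_simps power2_eq_square power3_eq_cube)
  show "P \<in> range (\<lambda>x. proj (ell_vec x))"
  proof (cases "a = 0")
    case True
    then have "b \<noteq> 0" using v(1) abcd bc dd by auto
    then have "v = scal4 b (ell_vec None)" using True abcd bc dd by (simp add: algebra_simps)
    then have "P = proj (ell_vec None)" using v(2) proj_scal4 \<open>b \<noteq> 0\<close> by metis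
    then show ?thesis by blast
  next
    case False
    then have "v = scal4 a (ell_vec (Some (b/a)))" using abcd bc dd by (simp add: algebra_simps)
    then have "P = proj (ell_vec (Some (b/a)))" using v(2) proj_scal4 False by metis
    then show ?thesis by blast
  qed
next
  fix P assume "P \<in> range (\<lambda>x. proj (ell_vec x))"
  then obtain x where x: "P = proj (ell_vec x)" by blast
  have "dot4 (- (u^3), 3 * u^2, - 3 * u, 1) (ell_vec x) = 0" "dot4 (0, 1, -1, 0) (ell_vec x) = 0"
    by (cases x; simp add: algebra_simps power2_eq_square power3_eq_cube)+
  then show "P \<in> ell u"
    unfolding ell_def line_of_planes_def using x proj_in_PG3[OF ell_vec_neq_0]
    by (simp add: on_plane_proj_iff)
qed

lemma inj_proj_ell_vec: "inj (\<lambda>x. proj (ell_vec x))"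
proof (rule injI)
  fix x y assume "proj (ell_vec x) = proj (ell_vec y)"
  then obtain e where e: "e \<noteq> 0" "ell_vec y = scal4 e (ell_vec x)"
    unfolding proj_eq_iff by blast
  show "x = y" using e by (cases x; cases y) auto
qed

lemma card_ell_Int: "card (ell u \<inter> X) = card {x. proj (ell_vec x) \<in> X}"
proof -
  have "ell u \<inter> X = {P \<in> range (\<lambda>x. proj (ell_vec x)). P \<in> X}"
    unfolding ell_eq_range by auto
  then show ?thesis using card_filter_range_inj[OF inj_proj_ell_vec] by simp
qed

definition osc_quadratic :: "'a \<Rightarrow> 'a \<Rightarrow> 'a" where
  "osc_quadratic s t = t^2 + (u - 3*s)*t + u^2 - 3*s*(u-1)"

definition osc_discriminant :: "'a \<Rightarrow> 'a" where
  "osc_discriminant s = 9*s^2 + (6*u-12)*s - 3*u^2"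

lemma osc_quadratic_eq_0_iff:
  "osc_quadratic s t = 0 \<longleftrightarrow> (2*t + u - 3*s)^2 = osc_discriminant s"
proof -
  have "4 * osc_quadratic s t = (2*t + u - 3*s)^2 - osc_discriminant s"
    unfolding osc_quadratic_def osc_discriminant_def by (simp add: algebra_simps power2_eq_square)
  then show ?thesis using four_neq_0 by (metis eq_iff_diff_eq_0 mult_eq_0_iff)
qed

lemma osc_discriminant_neq_0: "osc_discriminant s \<noteq> 0"
proof
  assume h: "osc_discriminant s = 0"
  have "osc_discriminant s = (3*s + u - 2)^2 - 4*(u^2 - u + 1)"
    unfolding osc_discriminant_def by (simp add: algebra_simps power2_eq_square)
  then have "u^2 - u + 1 = ((3*s + u - 2)/2)^2"
    using h four_neq_0 two by (simp add: power_divide)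
  then show False using nonsquare unfolding is_square_def by blast
qed

lemma dot4_osc_vec_ell_vec:
  "dot4 (osc_vec (Some t)) (ell_vec (Some s)) = - ((t - u) * osc_quadratic s t)"
  unfolding osc_quadratic_def by (simp add: algebra_simps power2_eq_square power3_eq_cube)

lemma card_osc_quadratic_roots:
  "card {t. osc_quadratic s t = 0} = (if is_square (osc_discriminant s) then 2 else 0)"
proof -
  have "bij_betw (\<lambda>t. 2*t + u - 3*s) {t. osc_quadratic s t = 0} {y. y^2 = osc_discriminant s}"
    by (rule bij_betw_byWitness[where f'="\<lambda>y. (y - u + 3*s)/2"])
      (use two in \<open>auto simp: osc_quadratic_eq_0_iff field_simps\<close>)
  then show ?thesis
    using card_square_roots[OF two osc_discriminant_neq_0] bij_betw_same_card by metis
qed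

lemma osc_quadratic_at_u_square: "osc_quadratic s u = 0 \<Longrightarrow> is_square (osc_discriminant s)"
  unfolding osc_quadratic_eq_0_iff is_square_def by metis

lemma n_osc_ell_point:
  "n_osc (proj (ell_vec (Some s))) =
    (if is_square (osc_discriminant s) then (if osc_quadratic s u = 0 then 2 else 3) else 1)"
proof -
  have "n_osc (proj (ell_vec (Some s))) = card {x. dot4 (osc_vec x) (ell_vec (Some s)) = 0}"
    by (rule n_osc_proj[OF three])
  also have "\<dots> = card {t. dot4 (osc_vec (Some t)) (ell_vec (Some s)) = 0}"
    by (subst card_option_Collect) simp
  also have "{t. dot4 (osc_vec (Some t)) (ell_vec (Some s)) = 0} = insert u {t. osc_quadratic s t = 0}"
    unfolding dot4_osc_vec_ell_vec by auto
  finally show ?thesis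
    using card_osc_quadratic_roots[of s] osc_quadratic_at_u_square[of s] by (auto simp: card_insert_if)
qed

lemma n_osc_ell_point_inf: "n_osc (proj (ell_vec None)) = (if 2*u = 1 then 2 else 3)"
proof -
  have "n_osc (proj (ell_vec None)) = card {x. dot4 (osc_vec x) (ell_vec None) = 0}"
    by (rule n_osc_proj[OF three])
  also have "\<dots> = card {t. dot4 (osc_vec (Some t)) (ell_vec None) = 0} + 1"
    by (subst card_option_Collect) simp
  also have "{t. dot4 (osc_vec (Some t)) (ell_vec None) = 0} = {u, 1 - u}"
  proof -
    have "dot4 (osc_vec (Some t)) (ell_vec None) = 3*((t - u)*(t - (1 - u)))" for t
      by (simp add: algebra_simps power2_eq_square)
    then show ?thesis using three by auto
  qed
  finally show ?thesis by (auto simp: card_insert_if)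
qed

lemma ell_point_notin_twisted_cubic: "proj (ell_vec x) \<notin> twisted_cubic"
proof
  assume "proj (ell_vec x) \<in> twisted_cubic"
  then obtain y where "proj (ell_vec x) = proj (cubic_vec y)"
    unfolding twisted_cubic_eq_range by blast
  then obtain e where e: "e \<noteq> 0" "cubic_vec y = scal4 e (ell_vec x)"
    unfolding proj_eq_iff by blast
  show False
  proof (cases x)
    case None then show False using e by (cases y) auto
  next
    case (Some s)
    show False
    proof (cases y)
      case None then show False using e Some by auto
    next
      case (Some t)
      then have h: "e = 1" "t = s" "t^2 = s" "t^3 = u^3 + 3*u*(1-u)*s"
        using e \<open>x = Some s\<close> by auto
      then have "s*(s - 1) = 0" by (simp add: algebra_simps power2_eq_square)
      then have "s = 0 \<or> s = 1" by auto
      then show False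
      proof
        assume "s = 0" then show False using h u_neq_0 by simp
      next
        assume "s = 1"
        then have "(u - 1)^3 = 0" using h by (simp add: algebra_simps power2_eq_square power3_eq_cube)
        then show False using u_neq_1 by simp
      qed
    qed
  qed
qed

lemma ell_point_on_tangent_iff:
  "(\<exists>L\<in>tangent_lines. proj (ell_vec x) \<in> L) \<longleftrightarrow>
    (\<exists>t a b e. e \<noteq> 0 \<and>
      add4 (scal4 a (1, t, t^2, t^3)) (scal4 b (0, 1, 2*t, 3*t^2)) = scal4 e (ell_vec x))"
proof -
  have inf: "proj (ell_vec x) \<notin> tangent_line_inf"
  proof
    assume "proj (ell_vec x) \<in> tangent_line_inf"
    then obtain a b e where
      "e \<noteq> 0" "add4 (scal4 a (0,0,0,1)) (scal4 b (0,0,1,0)) = scal4 e (ell_vec x)"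
      unfolding tangent_line_inf_def proj_in_span_line_iff[OF ell_vec_neq_0] by blast
    then show False by (cases x) auto
  qed
  have "(\<exists>L\<in>tangent_lines. proj (ell_vec x) \<in> L) \<longleftrightarrow> (\<exists>t. proj (ell_vec x) \<in> tangent_line t)"
    using inf unfolding tangent_lines_def by blast
  also have "\<dots> \<longleftrightarrow> (\<exists>t a b e. e \<noteq> 0 \<and>
      add4 (scal4 a (1, t, t^2, t^3)) (scal4 b (0, 1, 2*t, 3*t^2)) = scal4 e (ell_vec x))"
    unfolding tangent_line_def proj_in_span_line_iff[OF ell_vec_neq_0] ..
  finally show ?thesis .
qed

lemma tangent_contact_param:
  assumes E1: "s*(1 - 2*t) + t^2 = 0" and E2: "u^3 + 3*u*(1-u)*s - 3*s*t^2 + 2*t^3 = 0"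
  shows "t = u"
proof -
  have "(t - u)^2 * (t^2 + (2*u - 2)*t - u) =
      (2*t - 1)*(u^3 + 3*u*(1-u)*s - 3*s*t^2 + 2*t^3) + (3*u*(1-u) - 3*t^2)*(s*(1 - 2*t) + t^2)"
    by (simp add: algebra_simps power2_eq_square power3_eq_cube)
  then have "(t - u)^2 * (t^2 + (2*u - 2)*t - u) = 0" using E1 E2 by simp
  moreover have "t^2 + (2*u - 2)*t - u \<noteq> 0"
  proof
    assume "t^2 + (2*u - 2)*t - u = 0"
    moreover have "t^2 + (2*u - 2)*t - u = (t + u - 1)^2 - (u^2 - u + 1)"
      by (simp add: algebra_simps power2_eq_square)
    ultimately have "u^2 - u + 1 = (t + u - 1)^2" by simp
    then show False using nonsquare unfolding is_square_def by blast
  qed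
  ultimately show ?thesis by simp
qed

lemma ell_point_on_tangent:
  "(\<exists>L\<in>tangent_lines. proj (ell_vec (Some s)) \<in> L) \<longleftrightarrow> osc_quadratic s u = 0"
proof -
  have Gu: "osc_quadratic s u = 3*(u^2 - s*(2*u - 1))"
    unfolding osc_quadratic_def by (simp add: algebra_simps power2_eq_square)
  show ?thesis
  proof
    assume "\<exists>L\<in>tangent_lines. proj (ell_vec (Some s)) \<in> L"
    then obtain t a b e where e: "e \<noteq> 0"
      "add4 (scal4 a (1, t, t^2, t^3)) (scal4 b (0, 1, 2*t, 3*t^2)) = scal4 e (ell_vec (Some s))"
      unfolding ell_point_on_tangent_iff by blast
    then have h: "a = e" "a*t + b = e*s" "a*t^2 + b*(2*t) = e*s"
      "a*t^3 + b*(3*t^2) = e*(u^3 + 3*u*(1-u)*s)"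
      by auto
    then have b: "b = e*(s - t)" by (simp add: algebra_simps)
    have "e*(s*(1 - 2*t) + t^2) = 0"
      using h(3) h(1) b by (simp add: algebra_simps power2_eq_square)
    then have E1: "s*(1 - 2*t) + t^2 = 0" using e by simp
    have "e*(u^3 + 3*u*(1-u)*s - 3*s*t^2 + 2*t^3) = 0" using h(4) h(1) b
      by (simp add: algebra_simps power2_eq_square power3_eq_cube)
    then have E2: "u^3 + 3*u*(1-u)*s - 3*s*t^2 + 2*t^3 = 0" using e by simp
    have "t = u" by (rule tangent_contact_param[OF E1 E2])
    then show "osc_quadratic s u = 0" using E1 Gu by (simp add: algebra_simps power2_eq_square)
  next
    assume "osc_quadratic s u = 0"
    then have us: "u^2 = s*(2*u - 1)" using Gu three by simp
    have w: "add4 (scal4 1 (1, u, u^2, u^3)) (scal4 (s - u) (0, 1, 2*u, 3*u^2))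
        = scal4 1 (ell_vec (Some s))"
    proof -
      have "u^2 + (s - u)*(2*u) = s" using us by (simp add: algebra_simps power2_eq_square)
      moreover have "u^3 + (s - u)*(3*u^2) = u^3 + 3*u*(1-u)*s"
      proof -
        have "u^3 + (s-u)*(3*u^2) - (u^3 + 3*u*(1-u)*s) = 3*u*(s*(2*u-1) - u^2)"
          by (simp add: algebra_simps power2_eq_square power3_eq_cube)
        then show ?thesis using us by simp
      qed
      ultimately show ?thesis by simp
    qed
    then show "\<exists>L\<in>tangent_lines. proj (ell_vec (Some s)) \<in> L"
      unfolding ell_point_on_tangent_iff using one_neq_zero by blast
  qed
qed

lemma ell_point_inf_on_tangent: "(\<exists>L\<in>tangent_lines. proj (ell_vec None) \<in> L) \<longleftrightarrow> 2*u = 1"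
proof
  assume "\<exists>L\<in>tangent_lines. proj (ell_vec None) \<in> L"
  then obtain t a b e where e: "e \<noteq> 0"
    "add4 (scal4 a (1, t, t^2, t^3)) (scal4 b (0, 1, 2*t, 3*t^2)) = scal4 e (ell_vec None)"
    unfolding ell_point_on_tangent_iff by blast
  then have h: "a = 0" "b = e" "b*(2*t) = e" "b*(3*t^2) = e*(3*u*(1-u))"
    by auto
  then have t: "2*t = 1" and t2: "t^2 = u*(1-u)" using e three by simp_all
  have "(2*u - 1)^2 = (2*t)^2 - 4*(u*(1-u))"
    using t by (simp add: algebra_simps power2_eq_square)
  also have "\<dots> = 0" using t2 by (simp add: power_mult_distrib)
  finally show "2*u = 1" by simp
next
  assume u: "2*u = 1"
  have "add4 (scal4 0 (1, u, u^2, u^3)) (scal4 1 (0, 1, 2*u, 3*u^2)) = scal4 1 (ell_vec None)"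
  proof -
    have "3*u*(1-u) - 3*u^2 = 3*u*(1 - 2*u)" by (simp add: algebra_simps power2_eq_square)
    moreover have "3*u*(1 - 2*u) = 0" using u by simp
    ultimately have "3*u^2 = 3*u*(1-u)" by (metis eq_iff_diff_eq_0)
    then show ?thesis using u by simp
  qed
  then show "\<exists>L\<in>tangent_lines. proj (ell_vec None) \<in> L"
    unfolding ell_point_on_tangent_iff using one_neq_zero by blast
qed

lemma pt_class_simps:
  "pt_class 1 = twisted_cubic"
  "pt_class 2 = {P \<in> PG3. P \<notin> twisted_cubic \<and> (\<exists>L\<in>tangent_lines. P \<in> L)}"
  "pt_class 3 = {P \<in> PG3. P \<notin> twisted_cubic \<and> n_osc P = 3}"
  "pt_class 4 = {P \<in> PG3. P \<notin> twisted_cubic \<and> n_osc P = 1}"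
  "pt_class 5 = {P \<in> PG3. n_osc P = 0}"
  by (simp_all add: pt_class_def)

lemma proj_ell_vec_in_PG3: "proj (ell_vec x) \<in> PG3" by (rule proj_in_PG3[OF ell_vec_neq_0])

definition square_disc_count :: nat where
  "square_disc_count = card {s. is_square (osc_discriminant s)}"

lemma osc_quadratic_at_u: "osc_quadratic s u = 0 \<longleftrightarrow> s*(2*u - 1) = u^2"
proof -
  have "osc_quadratic s u = 3*(u^2 - s*(2*u - 1))"
    unfolding osc_quadratic_def by (simp add: algebra_simps power2_eq_square)
  then show ?thesis using three by auto
qed

lemma card_osc_quadratic_at_u: "card {s. osc_quadratic s u = 0} = (if 2*u = 1 then 0 else 1)"
proof (cases "2*u = 1")
  case True
  have "u^2 \<noteq> 0" using u_neq_0 by simp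
  then have "{s. osc_quadratic s u = 0} = {}" unfolding osc_quadratic_at_u using True by auto
  then show ?thesis using True by simp
next
  case False
  then have "2*u - 1 \<noteq> 0" by simp
  then have "{s. osc_quadratic s u = 0} = {u^2/(2*u - 1)}"
    unfolding osc_quadratic_at_u by (auto simp: field_simps)
  then show ?thesis using False by simp
qed

lemma card_ell_pt_class_1: "card {x. proj (ell_vec x) \<in> pt_class 1} = 0"
  using ell_point_notin_twisted_cubic by (simp add: pt_class_def)

lemma card_ell_pt_class_2: "card {x. proj (ell_vec x) \<in> pt_class 2} = 1"
proof -
  have "card {x. proj (ell_vec x) \<in> pt_class 2}
      = card {s. osc_quadratic s u = 0} + (if 2*u = 1 then 1 else 0)"
    by (subst card_option_Collect) (simp del: ell_vec_simps add: pt_class_simps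
        proj_ell_vec_in_PG3 ell_point_notin_twisted_cubic ell_point_on_tangent ell_point_inf_on_tangent)
  then show ?thesis using card_osc_quadratic_at_u by simp
qed

lemma card_ell_pt_class_3: "card {x. proj (ell_vec x) \<in> pt_class 3} = square_disc_count"
proof -
  let ?Sq = "{s. is_square (osc_discriminant s)}" and ?T = "{s. osc_quadratic s u = 0}"
  have "proj (ell_vec (Some s)) \<in> pt_class 3 \<longleftrightarrow> s \<in> ?Sq - ?T" for s
    by (auto simp del: ell_vec_simps
        simp: pt_class_simps proj_ell_vec_in_PG3 ell_point_notin_twisted_cubic n_osc_ell_point)
  moreover have "proj (ell_vec None) \<in> pt_class 3 \<longleftrightarrow> 2*u \<noteq> 1"
    by (auto simp del: ell_vec_simps
        simp: pt_class_simps proj_ell_vec_in_PG3 ell_point_notin_twisted_cubic n_osc_ell_point_inf)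
  ultimately have "card {x. proj (ell_vec x) \<in> pt_class 3} = card (?Sq - ?T) + (if 2*u = 1 then 0 else 1)"
    by (subst card_option_Collect) (simp add: set_diff_eq)
  moreover have "?T \<subseteq> ?Sq" using osc_quadratic_at_u_square by auto
  then have "card (?Sq - ?T) = card ?Sq - card ?T" "card ?T \<le> card ?Sq"
    by (simp_all add: card_Diff_subset card_mono)
  ultimately show ?thesis
    unfolding square_disc_count_def using card_osc_quadratic_at_u by (auto split: if_splits)
qed

lemma card_ell_pt_class_4:
  "card {x. proj (ell_vec x) \<in> pt_class 4} = card (UNIV::'a set) - square_disc_count"
proof -
  have "card {x. proj (ell_vec x) \<in> pt_class 4} = card (UNIV - {s. is_square (osc_discriminant s)})"
    by (subst card_option_Collect) (simp del: ell_vec_simps add: pt_class_simps set_diff_eq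
        proj_ell_vec_in_PG3 ell_point_notin_twisted_cubic n_osc_ell_point n_osc_ell_point_inf)
  then show ?thesis unfolding square_disc_count_def by (simp add: card_Diff_subset)
qed

lemma card_ell_pt_class_5: "card {x. proj (ell_vec x) \<in> pt_class 5} = 0"
proof -
  have "n_osc (proj (ell_vec x)) \<noteq> 0" for x
    by (cases x) (simp_all del: ell_vec_simps add: n_osc_ell_point n_osc_ell_point_inf)
  then show ?thesis by (simp add: pt_class_simps)
qed

lemma double_square_disc_count: "2 * square_disc_count = card (UNIV::'a set) - 1"
proof -
  define m where "m = 4*(u^2 - u + 1)"
  have disc: "osc_discriminant s = (3*s + u - 2)^2 - m" for s
    unfolding osc_discriminant_def m_def by (simp add: algebra_simps power2_eq_square)
  have "bij (\<lambda>s. 3*s + u - 2)"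
    by (rule bij_betw_byWitness[where f'="\<lambda>x. (x - u + 2)/3"]) (use three in \<open>auto simp: field_simps\<close>)
  then have "square_disc_count = card {x. is_square (x^2 - m)}"
    unfolding square_disc_count_def disc
    by (intro bij_betw_same_card[where f="\<lambda>s. 3*s + u - 2"]) (auto simp: bij_betw_def inj_on_def)
  moreover have "\<not> is_square m"
  proof
    assume "is_square m"
    then obtain y where "4*(u^2 - u + 1) = y^2" unfolding m_def is_square_def by blast
    then have "4*(u^2 - u + 1) = 4*(y/2)^2" using four_neq_0 by (simp add: power_divide)
    then have "u^2 - u + 1 = (y/2)^2" using four_neq_0 by (rule mult_left_cancel[THEN iffD1, rotated])
    then show False using nonsquare unfolding is_square_def by blast
  qed
  ultimately show ?thesis using card_squares_minus_nonsquare[OF two] by simp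
qed

lemma OD0_ell:
  "OD0 (ell u) = [0, 1, (card (UNIV::'a set) - 1) div 2, (card (UNIV::'a set) + 1) div 2, 0]"
proof -
  have "card (UNIV::'a set) \<ge> 1" by (simp add: Suc_le_eq finite_UNIV_card_ge_0)
  then have "card (UNIV::'a set) = 2 * square_disc_count + 1"
    using double_square_disc_count by linarith
  then show ?thesis
    unfolding OD0_def using card_ell_pt_class_1 card_ell_pt_class_2 card_ell_pt_class_3
      card_ell_pt_class_4 card_ell_pt_class_5 card_ell_Int by simp
qed

section \<open>The planes through \<open>\<ell>\<^sub>u\<close>\<close>

text \<open>\<open>pencil_vec (Some c)\<close> is the plane \<open>Y\<^sub>1 - Y\<^sub>2 + c \<Pi>(u)\<close> and \<open>pencil_vec None\<close> is \<open>\<Pi>(u)\<close>.\<close>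

definition pencil_vec :: "'a option \<Rightarrow> 'a vec4" where
  "pencil_vec x = (case x of Some c \<Rightarrow> (- c*u^3, 3*c*u^2 + 1, - 3*c*u - 1, c)
                           | None \<Rightarrow> (- (u^3), 3 * u^2, - 3 * u, 1))"

lemma pencil_vec_simps [simp]:
  "pencil_vec (Some c) = (- c*u^3, 3*c*u^2 + 1, - 3*c*u - 1, c)"
  "pencil_vec None = (- (u^3), 3 * u^2, - 3 * u, 1)"
  by (auto simp: pencil_vec_def)

lemma pencil_vec_neq_0: "pencil_vec x \<noteq> (0,0,0,0)"
  by (cases x) auto

lemma dot4_pencil_vec_ell_vec: "dot4 (pencil_vec x) (ell_vec y) = 0"
  by (cases x; cases y) (simp_all add: algebra_simps power2_eq_square power3_eq_cube)

lemma annihilator_of_ell_vec: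
  assumes g: "g \<noteq> (0,0,0,0)" and dg: "\<And>x. dot4 g (ell_vec x) = 0"
  shows "\<exists>x e. e \<noteq> 0 \<and> g = scal4 e (pencil_vec x)"
proof -
  obtain a b c d where abcd: "g = (a,b,c,d)" by (cases g)
  have e1: "b + c + 3*u*(1-u)*d = 0" using dg[of None] abcd by (simp add: algebra_simps)
  have e2: "a + d*u^3 = 0" using dg[of "Some 0"] abcd by (simp add: algebra_simps)
  define f where "f = b - 3*u^2*d"
  show ?thesis
  proof (cases "f = 0")
    case False
    have "f * (- (d/f)*u^3) = a" using False e2 by (simp add: field_simps add_eq_0_iff)
    moreover have "f * (3*(d/f)*u^2 + 1) = b" using False unfolding f_def by (simp add: field_simps)
    moreover have "f * (- 3*(d/f)*u - 1) = c"
    proof -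
      have "f * (- 3*(d/f)*u - 1) = - 3*d*u - f" using False by (simp add: field_simps)
      also have "\<dots> = c" using e1 unfolding f_def by algebra
      finally show ?thesis .
    qed
    ultimately have "g = scal4 f (pencil_vec (Some (d/f)))" using abcd False by simp
    then show ?thesis using False by blast
  next
    case True
    have "c = - 3*u*d" using e1 True unfolding f_def by algebra
    moreover have "a = d*(-(u^3))" using e2 by algebra
    moreover have "b = d*(3*u^2)" using True unfolding f_def by (simp add: algebra_simps)
    ultimately have "g = scal4 d (pencil_vec None)" using abcd by (simp add: algebra_simps)
    moreover from this have "d \<noteq> 0" using g by auto
    ultimately show ?thesis by blast
  qed
qed

lemma planes_through_ell_eq_range:
  "{H \<in> PG3. \<forall>P\<in>ell u. on_plane P H} = range (\<lambda>x. proj (pencil_vec x))"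
proof (rule set_eqI, rule iffI)
  fix H assume H: "H \<in> {H \<in> PG3. \<forall>P\<in>ell u. on_plane P H}"
  then obtain g where g: "g \<noteq> (0,0,0,0)" "H = proj g" unfolding PG3_def by blast
  have "dot4 g (ell_vec x) = 0" for x
    using H g(2) unfolding ell_eq_range by (auto simp: on_plane_proj_iff)
  then obtain x e where "e \<noteq> 0" "g = scal4 e (pencil_vec x)"
    using annihilator_of_ell_vec[OF g(1)] by blast
  then show "H \<in> range (\<lambda>x. proj (pencil_vec x))" using g(2) proj_scal4 by (metis rangeI)
next
  fix H assume "H \<in> range (\<lambda>x. proj (pencil_vec x))"
  then show "H \<in> {H \<in> PG3. \<forall>P\<in>ell u. on_plane P H}"
    unfolding ell_eq_range
    using proj_in_PG3[OF pencil_vec_neq_0] dot4_pencil_vec_ell_vec by (auto simp: on_plane_proj_iff)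
qed

lemma inj_proj_pencil_vec: "inj (\<lambda>x. proj (pencil_vec x))"
proof (rule injI)
  fix x y assume "proj (pencil_vec x) = proj (pencil_vec y)"
  then obtain e where e: "e \<noteq> 0" "pencil_vec y = scal4 e (pencil_vec x)"
    unfolding proj_eq_iff by blast
  show "x = y"
  proof (cases x; cases y)
    fix c c' assume "x = Some c" "y = Some c'"
    then have "c' = e*c" "3*c'*u^2 + 1 = e*(3*c*u^2 + 1)" using e by auto
    then have "e = 1" by (simp add: algebra_simps)
    then show "x = y" using e \<open>x = Some c\<close> \<open>y = Some c'\<close> by simp
  next
    fix c assume "x = Some c" "y = None"
    then have "e*c = 1" "3*u^2 = e*(3*c*u^2 + 1)" using e by auto
    moreover have "e*(3*c*u^2 + 1) = 3*u^2*(e*c) + e" by (simp add: algebra_simps)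
    ultimately have "3*u^2 = 3*u^2 + e" by simp
    then show "x = y" using e by simp
  qed (use e in auto)
qed

lemma proj_pencil_vec_None_osc: "proj (pencil_vec None) \<in> osc_planes"
  unfolding osc_planes_def osc_plane_def by simp

lemma proj_pencil_vec_notin_osc_planes: "proj (pencil_vec (Some c)) \<notin> osc_planes"
proof
  assume "proj (pencil_vec (Some c)) \<in> osc_planes"
  then obtain y where "proj (osc_vec y) = proj (pencil_vec (Some c))"
    unfolding osc_planes_eq_range by blast
  then obtain e where e: "e \<noteq> 0" "pencil_vec (Some c) = scal4 e (osc_vec y)"
    unfolding proj_eq_iff by blast
  show False
  proof (cases y)
    case None
    then show False using e by auto
  next
    case (Some t)
    then have h: "- c*u^3 = e*(- (t^3))" "3*c*u^2 + 1 = e*(3*t^2)" "- 3*c*u - 1 = e*(- 3*t)" "c = e"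
      using e by auto
    have h1: "3*e*(t - u) = 1" using h(3) h(4) by (simp add: algebra_simps)
    have h2: "3*e*(t - u)*(t + u) = 1" using h(2) h(4) by (simp add: algebra_simps power2_eq_square)
    have t: "t = 1 - u" using h1 h2 by (simp add: eq_diff_eq)
    have "(1 - 2*u)*(u^2 - u + 1) = (1 - u)^3 - u^3"
      by (simp add: algebra_simps power2_eq_square power3_eq_cube)
    also have "\<dots> = 0" using h(1) h(4) e(1) t by simp
    finally have "(1 - 2*u)*(u^2 - u + 1) = 0" .
    moreover have "1 - 2*u \<noteq> 0"
    proof
      assume "1 - 2*u = 0"
      then have "t - u = 0" using t by simp
      then show False using h1 by simp
    qed
    ultimately show False using nonsquare_neq_0[OF nonsquare] by simp
  qed
qed

sublocale pencil: finite_critical_free_cubic "u*(u-1)" "2*u - 1" 1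
proof
  show "u*(u-1) \<noteq> 0" using u_neq_0 u_neq_1 by simp
  have "(2*u - 1)^2 - 3*(u*(u-1))*1 = u^2 - u + 1"
    by (simp add: algebra_simps power2_eq_square)
  then show "\<not> is_square ((2*u - 1)^2 - 3*(u*(u-1))*1)" using nonsquare by simp
qed

text \<open>The coordinate \<open>w = 1/(t - u)\<close> on the twisted cubic minus \<open>P(u)\<close> (with \<open>P(\<infinity>) \<mapsto> 0\<close>):
  in it the plane \<open>Y\<^sub>1 - Y\<^sub>2 + c \<Pi>(u)\<close> cuts out the fibre of \<open>pencil.cubic\<close> over \<open>c\<close>.\<close>

definition cubic_coord :: "'a option \<Rightarrow> 'a" where
  "cubic_coord x = (case x of None \<Rightarrow> 0 | Some t \<Rightarrow> 1/(t - u))"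

lemma bij_cubic_coord: "bij_betw cubic_coord (- {Some u}) UNIV"
proof (rule bij_betw_byWitness[where f'="\<lambda>w. if w = 0 then None else Some (u + 1/w)"])
  show "\<forall>x\<in>- {Some u}. (if cubic_coord x = 0 then None else Some (u + 1/cubic_coord x)) = x"
    by (auto simp: cubic_coord_def split: option.split)
qed (auto simp: cubic_coord_def)

lemma dot4_pencil_vec_cubic_vec:
  "dot4 (pencil_vec (Some c)) (cubic_vec (Some t)) = (t - u)^3 * (c - pencil.cubic (1/(t - u)))"
  if "t \<noteq> u"
proof -
  define z where "z = 1/(t - u)"
  have "(t - u) * z = 1" using that unfolding z_def by simp
  then have "(3*c*u^2 + 1)*t - c*u^3 + (- 3*c*u - 1)*t^2 + c*t^3
      = (t - u)^3 * (c - (u*(u-1)*z^3 + (2*u - 1)*z^2 + 1*z))"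
    by algebra
  then show ?thesis unfolding pencil.cubic_def z_def by simp
qed

lemma pencil_plane_meets_cubic_iff:
  assumes "x \<noteq> Some u"
  shows "dot4 (pencil_vec (Some c)) (cubic_vec x) = 0 \<longleftrightarrow> pencil.cubic (cubic_coord x) = c"
proof (cases x)
  case (Some t)
  then have "t - u \<noteq> 0" using assms by simp
  then show ?thesis using Some dot4_pencil_vec_cubic_vec[of t c] by (auto simp: cubic_coord_def)
qed (simp add: cubic_coord_def pencil.cubic_def)

lemma n_cubic_pencil_plane: "n_cubic (proj (pencil_vec (Some c))) = card {w. pencil.cubic w = c}"
proof -
  have "dot4 (pencil_vec (Some c)) (cubic_vec (Some u)) = u * (1 - u)"
    by (simp add: algebra_simps power2_eq_square power3_eq_cube)
  then have "dot4 (pencil_vec (Some c)) (cubic_vec (Some u)) \<noteq> 0" using u_neq_0 u_neq_1 by simp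
  then have "dot4 (pencil_vec (Some c)) (cubic_vec x) = 0
      \<longleftrightarrow> x \<in> - {Some u} \<and> pencil.cubic (cubic_coord x) = c" for x
    using pencil_plane_meets_cubic_iff[of x c] by (cases "x = Some u") auto
  then have "{x. dot4 (pencil_vec (Some c)) (cubic_vec x) = 0}
      = {x \<in> - {Some u}. pencil.cubic (cubic_coord x) = c}"
    by blast
  moreover have "bij_betw cubic_coord {x \<in> - {Some u}. pencil.cubic (cubic_coord x) = c}
      {w \<in> UNIV. pencil.cubic w = c}"
    by (rule bij_betw_Collect[OF bij_cubic_coord]) simp
  ultimately show ?thesis unfolding n_cubic_proj by (simp add: bij_betw_same_card)
qed

lemma n_cubic_pencil_plane_None: "n_cubic (proj (pencil_vec None)) = 1"
proof -
  have "dot4 (pencil_vec None) (cubic_vec (Some t)) = (t - u)^3" for t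
    by (simp add: algebra_simps power2_eq_square power3_eq_cube)
  moreover have "dot4 (pencil_vec None) (cubic_vec None) = 1" by simp
  ultimately have "{x. dot4 (pencil_vec None) (cubic_vec x) = 0} = {Some u}"
    by (intro set_eqI, case_tac x) (simp_all del: pencil_vec_simps cubic_vec_simps)
  then show ?thesis unfolding n_cubic_proj by simp
qed

definition n_fibres :: "nat \<Rightarrow> nat" where
  "n_fibres k = card {c. card {w. pencil.cubic w = c} = k}"

lemma pl_class_simps:
  "pl_class 1 = osc_planes"
  "pl_class 2 = {H \<in> PG3. n_cubic H = 2}"
  "pl_class 3 = {H \<in> PG3. n_cubic H = 3}"
  "pl_class 4 = {H \<in> PG3. H \<notin> osc_planes \<and> n_cubic H = 1}"
  "pl_class 5 = {H \<in> PG3. n_cubic H = 0}"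
  "pl_class (Suc 0) = osc_planes"
  by (simp_all add: pl_class_def)

lemma card_planes_through_ell:
  assumes "i \<in> {1,2,3,4,5}"
  shows "card {H \<in> pl_class i. \<forall>P\<in>ell u. on_plane P H} = card {x. proj (pencil_vec x) \<in> pl_class i}"
proof -
  have "osc_planes \<subseteq> PG3"
    unfolding osc_planes_eq_range using proj_in_PG3[OF osc_vec_neq_0] by blast
  then have "pl_class i \<subseteq> PG3" using assms by (auto simp: pl_class_simps)
  then have "{H \<in> pl_class i. \<forall>P\<in>ell u. on_plane P H} = {H \<in> range (\<lambda>x. proj (pencil_vec x)). H \<in> pl_class i}"
    using planes_through_ell_eq_range by blast
  then show ?thesis using card_filter_range_inj[OF inj_proj_pencil_vec] by simp
qed

lemma OD2_ell_fibres: "OD2 (ell u) = [1, 0, n_fibres 3, n_fibres 1, n_fibres 0]"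
proof -
  have PG3: "proj (pencil_vec x) \<in> PG3" for x by (rule proj_in_PG3[OF pencil_vec_neq_0])
  have not2: "card {w. pencil.cubic w = c} \<noteq> 2" for c
    using pencil.card_cubic_fibre[of c] by auto
  note simps = pl_class_simps PG3 n_cubic_pencil_plane n_cubic_pencil_plane_None n_fibres_def
    proj_pencil_vec_None_osc proj_pencil_vec_notin_osc_planes
  have "card {x. proj (pencil_vec x) \<in> pl_class 1} = 1"
       "card {x. proj (pencil_vec x) \<in> pl_class 2} = 0"
       "card {x. proj (pencil_vec x) \<in> pl_class 3} = n_fibres 3"
       "card {x. proj (pencil_vec x) \<in> pl_class 4} = n_fibres 1"
       "card {x. proj (pencil_vec x) \<in> pl_class 5} = n_fibres 0"
    by (subst card_option_Collect; simp del: pencil_vec_simps add: simps not2)+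
  then show ?thesis unfolding OD2_def using card_planes_through_ell by simp
qed

lemma OD2_ell:
  defines "q \<equiv> card (UNIV::'a set)"
  shows "OD2 (ell u) = (if is_square (-3::'a) then [1, 0, (q - 1) div 6, (q + 1) div 2, (q - 1) div 3]
                                          else [1, 0, (q + 1) div 6, (q - 1) div 2, (q + 1) div 3])"
proof -
  have q: "q \<ge> 1" unfolding q_def by (simp add: Suc_le_eq finite_UNIV_card_ge_0)
  have "3 * n_fibres 3 + n_fibres 1 = q" "n_fibres 0 + n_fibres 1 + n_fibres 3 = q"
    and six: "6 * n_fibres 3 = (if is_square (-3::'a) then q - 1 else q + 1)"
    using card_fibre_classes[of pencil.cubic, OF pencil.card_cubic_fibre]
      pencil.card_cubic_collisions[OF two three]
    unfolding n_fibres_def q_def by simp_all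
  note counts = fibre_class_counts_div[OF this(1,2)]
  show ?thesis
  proof (cases "is_square (-3::'a)")
    case True
    with six have "6 * n_fibres 3 = q - 1" by simp
    from counts(1)[OF this q] show ?thesis using True OD2_ell_fibres by simp
  next
    case False
    with six have "6 * n_fibres 3 = q + 1" by simp
    from counts(2)[OF this] show ?thesis using False OD2_ell_fibres by simp
  qed
qed

end

theorem mainTheorem6:
  fixes u :: "'a::{field,finite}"
  defines "q \<equiv> card (UNIV :: 'a set)"
  assumes "CHAR('a) \<noteq> 2" and "CHAR('a) \<noteq> 3"
    and "\<not> is_square (u^2 - u + 1)"
  shows "(is_square (-3 :: 'a) \<longrightarrow>
            OD2 (ell u) = [1, 0, (q - 1) div 6, (q + 1) div 2, (q - 1) div 3] \<and>
            OD0 (ell u) = [0, 1, (q - 1) div 2, (q + 1) div 2, 0])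
       \<and> (\<not> is_square (-3 :: 'a) \<longrightarrow>
            OD2 (ell u) = [1, 0, (q + 1) div 6, (q - 1) div 2, (q + 1) div 3] \<and>
            OD0 (ell u) = [0, 1, (q - 1) div 2, (q + 1) div 2, 0])"
proof -
  have "(2::'a) \<noteq> 0" and "(3::'a) \<noteq> 0"
    using of_nat_prime_neq_0[of 2] of_nat_prime_neq_0[of 3] assms(2,3) by simp_all
  then interpret ell_nonsquare u
    using assms(4) by unfold_locales
  show ?thesis using OD0_ell OD2_ell unfolding q_def by simp
qed

end
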